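(* Let $\Omega\subset\mathbb{R}^n$ be a bounded domain, take $\omega=\Omega$, let $m\ge2$, $k\ge1$ be integers, let $y_0\in L^2(\Omega)$ with $y_0\notin\mathcal{S}_m$, and let $\bar a_1,\dots,\bar a_k$ be positive numbers. For each $i\in\{1,\dots,k\}$ put $$T_i=\frac{1}{\lambda_i}\ln\Big(1+\frac{\lambda_i}{\bar a_i}\,|\langle y_0,\xi_i\rangle|\Big).$$ Then Problem $(\mathcal{P})$ with $\{\bar a_i\}_{i=1}^k$ does not have the bang-bang property if either of the following holds: (i) $k\ge m$ and the numbers $T_1,\dots,T_m$ are not all the same; (ii) $k<m$, $\langle y_0,\xi_j\rangle=0$ for all $j=k+1,\dots,m$, and the numbers $T_1,\dots,T_k$ are not all the same.
   Context: Let $\Omega\subset\mathbb{R}^n$ be a bounded domain and $\omega\subset\Omega$ a nonempty open set with characteristic function $\chi_\omega$. Let $\{\xi_i\}_{i\ge1}$ be an orthonormal basis of $L^2(\Omega)$ consisting of eigenfunctions of $-\Delta$ with homogeneous Dirichlet boundary condition, with eigenvalues $0<\lambda_1<\lambda_2\le\lambda_3\le\cdots\to+\infty$; $\langle\cdot,\cdot\rangle$ is the $L^2(\Omega)$ inner product. For $u$ and $y_0\in L^2(\Omega)$, $y(\cdot;u,y_0):\mathbb{R}^+\to L^2(\Omega)$ denotes the solution of $\partial_t y-\Delta y=\chi_\omega u$ in $\Omega\times\mathbb{R}^+$, $y=0$ on $\partial\Omega\times\mathbb{R}^+$, $y(\cdot,0)=y_0$. For a fixed integer $m\ge2$, $\mathcal{S}_m=\mathrm{span}\{\xi_{m+1},\xi_{m+2},\dots\}$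 (closed linear span, i.e. the set of $y$ with $\langle y,\xi_i\rangle=0$ for $i\le m$). The control constraint set is $\mathcal{U}_{\{\bar a_i\}_{i=1}^k}=\{\sum_{i=1}^k\alpha_i(\cdot)\xi_i:\ \alpha_i \text{ measurable from }\mathbb{R}^+\text{ to }[-\bar a_i,\bar a_i]\}$. Problem $(\mathcal{P})$ with $\{\bar a_i\}_{i=1}^k$: $\inf\{t\ge0: y(t;u,y_0)\in\mathcal{S}_m\}$ over $u\in\mathcal{U}_{\{\bar a_i\}_{i=1}^k}$; the infimum $t^*$ is the optimal time and an admissible $u^*$ with $y(t^*;u^*,y_0)\in\mathcal{S}_m$ is an optimal control. The problem has the bang-bang property if every optimal control $u^*=\sum_{i=1}^k\alpha_i^*\xi_i$ satisfies, for each $i$, $|\alpha_i^*(t)|=\bar a_i$ for almost every $t\in(0,t^* )$. *)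

theory Defs
  imports "HOL-Analysis.Analysis"
begin

section \<open>The space L^2(Omega) (via representatives)\<close>

definition L2 :: "'a::euclidean_space set \<Rightarrow> ('a \<Rightarrow> real) \<Rightarrow> bool" where
  "L2 \<Omega> f \<longleftrightarrow> f \<in> borel_measurable (lebesgue_on \<Omega>) \<and>
                 integrable (lebesgue_on \<Omega>) (\<lambda>x. (f x)\<^sup>2)"

definition L2v :: "'a::euclidean_space set \<Rightarrow> ('a \<Rightarrow> 'a) \<Rightarrow> bool" where
  "L2v \<Omega> G \<longleftrightarrow> G \<in> borel_measurable (lebesgue_on \<Omega>) \<and>
                 integrable (lebesgue_on \<Omega>) (\<lambda>x. (norm (G x))\<^sup>2)"

definition l2_inner :: "'a::euclidean_space set \<Rightarrow> ('a \<Rightarrow> real) \<Rightarrow> ('a \<Rightarrow> real) \<Rightarrow> real" where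
  "l2_inner \<Omega> f g = (LINT x|lebesgue_on \<Omega>. f x * g x)"

definition test_fun :: "'a::euclidean_space set \<Rightarrow> ('a \<Rightarrow> real) \<Rightarrow> ('a \<Rightarrow> 'a) \<Rightarrow> bool" where
  "test_fun \<Omega> \<phi> g \<longleftrightarrow> continuous_on UNIV g \<and>
     (\<forall>x. (\<phi> has_derivative (\<lambda>h. g x \<bullet> h)) (at x)) \<and>
     compact (closure {x. \<phi> x \<noteq> 0}) \<and> closure {x. \<phi> x \<noteq> 0} \<subseteq> \<Omega>"

definition weak_grad :: "'a::euclidean_space set \<Rightarrow> ('a \<Rightarrow> real) \<Rightarrow> ('a \<Rightarrow> 'a) \<Rightarrow> bool" where
  "weak_grad \<Omega> f G \<longleftrightarrow> (\<forall>\<phi> g. test_fun \<Omega> \<phi> g \<longrightarrow>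
     (\<forall>b\<in>Basis. (LINT x|lebesgue_on \<Omega>. f x * (g x \<bullet> b)) =
                  - (LINT x|lebesgue_on \<Omega>. (G x \<bullet> b) * \<phi> x)))"

definition H10 :: "'a::euclidean_space set \<Rightarrow> ('a \<Rightarrow> real) \<Rightarrow> ('a \<Rightarrow> 'a) \<Rightarrow> bool" where
  "H10 \<Omega> f G \<longleftrightarrow> L2 \<Omega> f \<and> L2v \<Omega> G \<and> weak_grad \<Omega> f G \<and>
     (\<exists>\<phi>s gs. (\<forall>j. test_fun \<Omega> (\<phi>s j) (gs j)) \<and>
        (\<lambda>j. LINT x|lebesgue_on \<Omega>. (f x - \<phi>s j x)\<^sup>2 + (norm (G x - gs j x))\<^sup>2)
           \<longlonglongrightarrow> 0)"

definition dirichlet_eigenpair :: "'a::euclidean_space set \<Rightarrow> real \<Rightarrow> ('a \<Rightarrow> real) \<Rightarrow> bool" where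
  "dirichlet_eigenpair \<Omega> lam \<xi> \<longleftrightarrow> (\<exists>G. H10 \<Omega> \<xi> G \<and>
     (\<forall>\<phi> g. test_fun \<Omega> \<phi> g \<longrightarrow>
        (LINT x|lebesgue_on \<Omega>. G x \<bullet> g x) = lam * (LINT x|lebesgue_on \<Omega>. \<xi> x * \<phi> x)))"

text \<open>Standing assumptions: xi_1, xi_2, ... (indices from 1) is an orthonormal basis of
  L^2(Omega) of Dirichlet eigenfunctions with eigenvalues 0 < lam_1 < lam_2 \<le> ... \<rightarrow> \<infinity>.\<close>
definition dirichlet_eigenbasis ::
  "'a::euclidean_space set \<Rightarrow> (nat \<Rightarrow> 'a \<Rightarrow> real) \<Rightarrow> (nat \<Rightarrow> real) \<Rightarrow> bool" where
  "dirichlet_eigenbasis \<Omega> \<xi> lam \<longleftrightarrow>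
     (\<forall>i\<ge>1. L2 \<Omega> (\<xi> i) \<and> dirichlet_eigenpair \<Omega> (lam i) (\<xi> i)) \<and>
     (\<forall>i\<ge>1. \<forall>j\<ge>1. l2_inner \<Omega> (\<xi> i) (\<xi> j) = (if i = j then 1 else 0)) \<and>
     (\<forall>f. L2 \<Omega> f \<longrightarrow> (\<forall>i\<ge>1. l2_inner \<Omega> f (\<xi> i) = 0) \<longrightarrow>
          (AE x in lebesgue_on \<Omega>. f x = 0)) \<and>
     0 < lam 1 \<and> lam 1 < lam 2 \<and> (\<forall>i\<ge>1. lam i \<le> lam (Suc i)) \<and>
     filterlim lam at_top sequentially"

text \<open>A control u = \<Sum>_{j=1..k} alpha_j(.) xi_j is represented by alpha.
  Admissible: alpha_i measurable on R^+ with values in [-abar_i, abar_i].\<close>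
definition admissible :: "nat \<Rightarrow> (nat \<Rightarrow> real) \<Rightarrow> (nat \<Rightarrow> real \<Rightarrow> real) \<Rightarrow> bool" where
  "admissible k abar \<alpha> \<longleftrightarrow> (\<forall>i\<in>{1..k}.
     \<alpha> i \<in> borel_measurable (lebesgue_on {0..}) \<and> (\<forall>t\<ge>0. \<bar>\<alpha> i t\<bar> \<le> abar i))"

text \<open>Fourier coefficient <y(t;u,y0), xi_i> of the (mild) solution of
  y_t - Laplace y = chi_omega u, y = 0 on the boundary, y(0) = y0:
  e^{-lam_i t}<y0,xi_i> + int_0^t e^{-lam_i (t-s)} <chi_omega u(s), xi_i> ds.\<close>
definition sol_coeff ::
  "'a::euclidean_space set \<Rightarrow> 'a set \<Rightarrow> (nat \<Rightarrow> 'a \<Rightarrow> real) \<Rightarrow> (nat \<Rightarrow> real) \<Rightarrow> nat \<Rightarrow>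
   (nat \<Rightarrow> real \<Rightarrow> real) \<Rightarrow> ('a \<Rightarrow> real) \<Rightarrow> nat \<Rightarrow> real \<Rightarrow> real" where
  "sol_coeff \<Omega> \<omega> \<xi> lam k \<alpha> y0 i t =
     exp (- (lam i * t)) * l2_inner \<Omega> y0 (\<xi> i) +
     integral {0..t} (\<lambda>s. exp (- (lam i * (t - s))) *
        l2_inner \<Omega> (\<lambda>x. indicator \<omega> x * (\<Sum>j=1..k. \<alpha> j s * \<xi> j x)) (\<xi> i))"

text \<open>y(t;u,y0) \<in> S_m, i.e. <y(t;u,y0), xi_i> = 0 for i = 1..m.\<close>
definition reaches_Sm ::
  "'a::euclidean_space set \<Rightarrow> 'a set \<Rightarrow> (nat \<Rightarrow> 'a \<Rightarrow> real) \<Rightarrow> (nat \<Rightarrow> real) \<Rightarrow> nat \<Rightarrow> nat \<Rightarrow>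
   (nat \<Rightarrow> real \<Rightarrow> real) \<Rightarrow> ('a \<Rightarrow> real) \<Rightarrow> real \<Rightarrow> bool" where
  "reaches_Sm \<Omega> \<omega> \<xi> lam m k \<alpha> y0 t \<longleftrightarrow> (\<forall>i\<in>{1..m}. sol_coeff \<Omega> \<omega> \<xi> lam k \<alpha> y0 i t = 0)"

definition reach_times ::
  "'a::euclidean_space set \<Rightarrow> 'a set \<Rightarrow> (nat \<Rightarrow> 'a \<Rightarrow> real) \<Rightarrow> (nat \<Rightarrow> real) \<Rightarrow> nat \<Rightarrow> nat \<Rightarrow>
   (nat \<Rightarrow> real) \<Rightarrow> ('a \<Rightarrow> real) \<Rightarrow> real set" where
  "reach_times \<Omega> \<omega> \<xi> lam m k abar y0 =
     {t. 0 \<le> t \<and> (\<exists>\<alpha>. admissible k abar \<alpha> \<and> reaches_Sm \<Omega> \<omega> \<xi> lam m k \<alpha> y0 t)}"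

definition opt_time ::
  "'a::euclidean_space set \<Rightarrow> 'a set \<Rightarrow> (nat \<Rightarrow> 'a \<Rightarrow> real) \<Rightarrow> (nat \<Rightarrow> real) \<Rightarrow> nat \<Rightarrow> nat \<Rightarrow>
   (nat \<Rightarrow> real) \<Rightarrow> ('a \<Rightarrow> real) \<Rightarrow> real" where
  "opt_time \<Omega> \<omega> \<xi> lam m k abar y0 = Inf (reach_times \<Omega> \<omega> \<xi> lam m k abar y0)"

definition optimal_control ::
  "'a::euclidean_space set \<Rightarrow> 'a set \<Rightarrow> (nat \<Rightarrow> 'a \<Rightarrow> real) \<Rightarrow> (nat \<Rightarrow> real) \<Rightarrow> nat \<Rightarrow> nat \<Rightarrow>
   (nat \<Rightarrow> real) \<Rightarrow> ('a \<Rightarrow> real) \<Rightarrow> (nat \<Rightarrow> real \<Rightarrow> real) \<Rightarrow> bool" where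
  "optimal_control \<Omega> \<omega> \<xi> lam m k abar y0 \<alpha> \<longleftrightarrow>
     reach_times \<Omega> \<omega> \<xi> lam m k abar y0 \<noteq> {} \<and> admissible k abar \<alpha> \<and>
     reaches_Sm \<Omega> \<omega> \<xi> lam m k \<alpha> y0 (opt_time \<Omega> \<omega> \<xi> lam m k abar y0)"

definition bang_bang ::
  "'a::euclidean_space set \<Rightarrow> 'a set \<Rightarrow> (nat \<Rightarrow> 'a \<Rightarrow> real) \<Rightarrow> (nat \<Rightarrow> real) \<Rightarrow> nat \<Rightarrow> nat \<Rightarrow>
   (nat \<Rightarrow> real) \<Rightarrow> ('a \<Rightarrow> real) \<Rightarrow> bool" where
  "bang_bang \<Omega> \<omega> \<xi> lam m k abar y0 \<longleftrightarrow>
     (\<forall>\<alpha>. optimal_control \<Omega> \<omega> \<xi> lam m k abar y0 \<alpha> \<longrightarrow>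
        (\<forall>i\<in>{1..k}. AE t in lebesgue_on {0<..<opt_time \<Omega> \<omega> \<xi> lam m k abar y0}.
            \<bar>\<alpha> i t\<bar> = abar i))"

end

theory Submission
  imports Defs
begin

text \<open>With \<open>\<omega> = \<Omega>\<close> and controls spanned by \<open>\<xi>\<^sub>1, \<dots>, \<xi>\<^sub>k\<close>, the problem decouples into
  scalar problems \<open>z' = -\<lambda>\<^sub>i z + \<alpha>\<^sub>i\<close>, \<open>z(0) = \<langle>y\<^sub>0, \<xi>\<^sub>i\<rangle>\<close>, \<open>|\<alpha>\<^sub>i| \<le> a\<^sub>i\<close>. The \<open>i\<close>-th one can be
  steered to zero exactly at the times \<open>t \<ge> T\<^sub>i\<close>, and at \<open>T\<^sub>i\<close> only by bang control. Hence the
  optimal time is \<open>t\<^sup>* = max T\<^sub>i\<close>, and the control that is bang on \<open>[0, T\<^sub>i]\<close> and zero afterwards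
  is optimal. If some \<open>T\<^sub>i < t\<^sup>*\<close>, its \<open>i\<close>-th component vanishes on \<open>(T\<^sub>i, t\<^sup>*)\<close>, so this optimal
  control is not bang-bang.\<close>

definition mode_sol :: "real \<Rightarrow> real \<Rightarrow> (real \<Rightarrow> real) \<Rightarrow> real \<Rightarrow> real" where
  "mode_sol l y a t = exp (- (l * t)) * y + integral {0..t} (\<lambda>s. exp (- (l * (t - s))) * a s)"

definition min_null_time :: "real \<Rightarrow> real \<Rightarrow> real \<Rightarrow> real" where
  "min_null_time l A y = (1 / l) * ln (1 + (l / A) * \<bar>y\<bar>)"

definition bang_control ::
  "nat set \<Rightarrow> (nat \<Rightarrow> real) \<Rightarrow> (nat \<Rightarrow> real) \<Rightarrow> (nat \<Rightarrow> real) \<Rightarrow> nat \<Rightarrow> real \<Rightarrow> real" where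
  "bang_control I lam abar y i s =
     (if i \<in> I \<and> s \<le> min_null_time (lam i) (abar i) (y i) then - (abar i * sgn (y i)) else 0)"

lemma has_integral_exp_decay:
  fixes l t a b :: real
  assumes "l > 0" "a \<le> b"
  shows "((\<lambda>s. exp (- (l * (t - s)))) has_integral
           (exp (- (l * (t - b))) - exp (- (l * (t - a)))) / l) {a..b}"
proof -
  have "((\<lambda>s. exp (- (l * (t - s))) / l) has_vector_derivative exp (- (l * (t - x))))
          (at x within {a..b})" for x
  proof -
    have "((\<lambda>s. exp (- (l * (t - s))) / l) has_real_derivative (exp (- (l * (t - x))) * l) / l)
            (at x within {a..b})"
      by (auto intro!: derivative_eq_intros)
    then show ?thesis using assms(1) by (simp add: has_real_derivative_iff_has_vector_derivative)
  qed
  from fundamental_theorem_of_calculus[OF assms(2) this]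
  show ?thesis by (simp add: diff_divide_distrib)
qed

lemma abs_duhamel_integral_le:
  fixes l t A :: real and a :: "real \<Rightarrow> real"
  assumes "l > 0" "t \<ge> 0" "\<And>s. s \<ge> 0 \<Longrightarrow> \<bar>a s\<bar> \<le> A"
  shows "\<bar>integral {0..t} (\<lambda>s. exp (- (l * (t - s))) * a s)\<bar> \<le> A * (1 - exp (- (l * t))) / l"
proof (cases "(\<lambda>s. exp (- (l * (t - s))) * a s) integrable_on {0..t}")
  case True
  have majorant: "((\<lambda>s. A * exp (- (l * (t - s)))) has_integral A * ((1 - exp (- (l * t))) / l)) {0..t}"
    using has_integral_mult_right[OF has_integral_exp_decay[OF assms(1,2), of t]] by simp
  have "norm (integral {0..t} (\<lambda>s. exp (- (l * (t - s))) * a s))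
          \<le> integral {0..t} (\<lambda>s. A * exp (- (l * (t - s))))"
  proof (rule integral_norm_bound_integral[OF True])
    show "(\<lambda>s. A * exp (- (l * (t - s)))) integrable_on {0..t}" using majorant by blast
    fix x assume "x \<in> {0..t}"
    then have "\<bar>a x\<bar> \<le> A" using assms(3) by auto
    then show "norm (exp (- (l * (t - x))) * a x) \<le> A * exp (- (l * (t - x)))"
      by (simp add: abs_mult mult.commute)
  qed
  then show ?thesis using integral_unique[OF majorant] by simp
next
  case False
  have "A \<ge> 0" using assms(3)[of 0] by simp
  moreover have "exp (- (l * t)) \<le> 1" using assms by simp
  ultimately show ?thesis using assms(1) by (simp add: not_integrable_integral[OF False])
qed

lemma min_null_time_nonneg:
  assumes "l > 0" "A > 0"
  shows "0 \<le> min_null_time l A y"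
  using assms by (simp add: min_null_time_def)

lemma exp_min_null_time:
  assumes "l > 0" "A > 0"
  shows "exp (l * min_null_time l A y) = 1 + (l / A) * \<bar>y\<bar>"
proof -
  have "0 < 1 + (l / A) * \<bar>y\<bar>" using assms by (simp add: add_pos_nonneg)
  then show ?thesis using assms(1) by (simp add: min_null_time_def)
qed

lemma min_null_time_le_if_mode_sol_eq_0:
  assumes "l > 0" "A > 0" "t \<ge> 0" "\<And>s. s \<ge> 0 \<Longrightarrow> \<bar>a s\<bar> \<le> A"
    and "mode_sol l y a t = 0"
  shows "min_null_time l A y \<le> t"
proof -
  have "exp (- (l * t)) * y = - integral {0..t} (\<lambda>s. exp (- (l * (t - s))) * a s)"
    using assms(5) by (simp add: mode_sol_def eq_neg_iff_add_eq_0)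
  then have "exp (- (l * t)) * \<bar>y\<bar> = \<bar>integral {0..t} (\<lambda>s. exp (- (l * (t - s))) * a s)\<bar>"
    by (metis abs_minus_cancel abs_mult abs_exp_cancel)
  also have "\<dots> \<le> A * (1 - exp (- (l * t))) / l"
    using abs_duhamel_integral_le assms(1,3,4) by blast
  finally have bound: "exp (- (l * t)) * \<bar>y\<bar> \<le> A * (1 - exp (- (l * t))) / l" .
  have "\<bar>y\<bar> = exp (l * t) * (exp (- (l * t)) * \<bar>y\<bar>)"
    by (simp add: exp_minus_inverse mult.assoc[symmetric])
  also have "\<dots> \<le> exp (l * t) * (A * (1 - exp (- (l * t))) / l)"
    using bound by (rule mult_left_mono) simp
  also have "\<dots> = A * (exp (l * t) - 1) / l"
    by (simp add: right_diff_distrib exp_minus_inverse)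
  finally have "\<bar>y\<bar> \<le> A * (exp (l * t) - 1) / l" .
  then have "exp (l * min_null_time l A y) \<le> exp (l * t)"
    using assms(1,2) by (simp add: exp_min_null_time field_simps)
  then show ?thesis using assms(1) by simp
qed

lemma mode_sol_bang_control_eq_0:
  assumes "l > 0" "A > 0" "min_null_time l A y \<le> t"
  shows "mode_sol l y (\<lambda>s. if s \<le> min_null_time l A y then - (A * sgn y) else 0) t = 0"
proof -
  define \<tau> where "\<tau> = min_null_time l A y"
  have \<tau>: "0 \<le> \<tau>" "\<tau> \<le> t" using assms min_null_time_nonneg by (auto simp: \<tau>_def)
  have "integral {0..t} (\<lambda>s. exp (- (l * (t - s))) * (if s \<le> \<tau> then - (A * sgn y) else 0))
        = integral {0..t} (\<lambda>s. if s \<in> {..\<tau>} then - (A * sgn y) * exp (- (l * (t - s))) else 0)"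
    by (rule integral_cong) auto
  also have "\<dots> = integral ({..\<tau>} \<inter> {0..t}) (\<lambda>s. - (A * sgn y) * exp (- (l * (t - s))))"
    by (rule integral_restrict_Int)
  also have "{..\<tau>} \<inter> {0..t} = {0..\<tau>}" using \<tau> by auto
  also have "integral {0..\<tau>} (\<lambda>s. - (A * sgn y) * exp (- (l * (t - s)))) =
             - (A * sgn y) * ((exp (- (l * (t - \<tau>))) - exp (- (l * t))) / l)"
    using integral_unique[OF has_integral_mult_right[OF has_integral_exp_decay[OF assms(1) \<tau>(1)]]]
    by simp
  also have "\<dots> = - exp (- (l * t)) * (A * sgn y * (exp (l * \<tau>) - 1) / l)"
  proof -
    have "exp (- (l * (t - \<tau>))) = exp (- (l * t)) * exp (l * \<tau>)"
      by (simp flip: exp_add add: algebra_simps)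
    then show ?thesis by (simp add: algebra_simps)
  qed
  also have "A * sgn y * (exp (l * \<tau>) - 1) / l = y"
    using assms(1,2) by (simp add: \<tau>_def exp_min_null_time sgn_mult_abs)
  finally show ?thesis by (simp add: mode_sol_def \<tau>_def)
qed

lemma L2_integrable_mult:
  assumes "L2 \<Omega> f" "L2 \<Omega> g"
  shows "integrable (lebesgue_on \<Omega>) (\<lambda>x. f x * g x)"
proof (rule Bochner_Integration.integrable_bound[where f="\<lambda>x. (f x)\<^sup>2 + (g x)\<^sup>2"])
  show "integrable (lebesgue_on \<Omega>) (\<lambda>x. (f x)\<^sup>2 + (g x)\<^sup>2)"
    and "(\<lambda>x. f x * g x) \<in> borel_measurable (lebesgue_on \<Omega>)"
    using assms unfolding L2_def by auto
  have "2 * \<bar>f x * g x\<bar> \<le> (f x)\<^sup>2 + (g x)\<^sup>2" for x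
    using sum_squares_bound[of "\<bar>f x\<bar>" "\<bar>g x\<bar>"] by (simp add: abs_mult)
  then have "\<bar>f x * g x\<bar> \<le> (f x)\<^sup>2 + (g x)\<^sup>2" for x
    by (smt (verit) abs_ge_zero)
  then show "AE x in lebesgue_on \<Omega>. norm (f x * g x) \<le> norm ((f x)\<^sup>2 + (g x)\<^sup>2)" by simp
qed

lemma l2_inner_eigenbasis_combination:
  assumes B: "dirichlet_eigenbasis \<Omega> \<xi> lam" and i: "i \<ge> 1"
  shows "l2_inner \<Omega> (\<lambda>x. indicator \<Omega> x * (\<Sum>j=1..k. a j * \<xi> j x)) (\<xi> i) =
         (if i \<le> k then a i else 0)"
proof -
  have L2: "\<And>j. j \<ge> 1 \<Longrightarrow> L2 \<Omega> (\<xi> j)"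
    and orth: "\<And>j. j \<ge> 1 \<Longrightarrow> l2_inner \<Omega> (\<xi> j) (\<xi> i) = (if j = i then 1 else 0)"
    using B i unfolding dirichlet_eigenbasis_def by blast+
  have "l2_inner \<Omega> (\<lambda>x. indicator \<Omega> x * (\<Sum>j=1..k. a j * \<xi> j x)) (\<xi> i) =
        (LINT x|lebesgue_on \<Omega>. (\<Sum>j=1..k. a j * (\<xi> j x * \<xi> i x)))"
    unfolding l2_inner_def
    by (rule Bochner_Integration.integral_cong) (auto simp: sum_distrib_right mult.assoc)
  also have "\<dots> = (\<Sum>j=1..k. a j * l2_inner \<Omega> (\<xi> j) (\<xi> i))"
    unfolding l2_inner_def
    by (subst Bochner_Integration.integral_sum) (use L2_integrable_mult L2 i in auto)
  also have "\<dots> = (\<Sum>j=1..k. if j = i then a j else 0)"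
    by (rule sum.cong) (auto simp: orth)
  finally show ?thesis using i by (simp add: sum.delta)
qed

lemma sol_coeff_eq_mode_sol:
  assumes "dirichlet_eigenbasis \<Omega> \<xi> lam" "i \<ge> 1"
  shows "sol_coeff \<Omega> \<Omega> \<xi> lam k \<alpha> y0 i t =
         mode_sol (lam i) (l2_inner \<Omega> y0 (\<xi> i)) (\<lambda>s. if i \<le> k then \<alpha> i s else 0) t"
  using l2_inner_eigenbasis_combination[OF assms]
  by (simp add: sol_coeff_def mode_sol_def)

lemma dirichlet_eigenbasis_eigenvalue_pos:
  assumes B: "dirichlet_eigenbasis \<Omega> \<xi> lam" and i: "i \<ge> 1"
  shows "lam i > 0"
proof -
  have pos: "0 < lam 1" and mono: "\<And>i. i \<ge> 1 \<Longrightarrow> lam i \<le> lam (Suc i)"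
    using B unfolding dirichlet_eigenbasis_def by auto
  have "lam 1 \<le> lam i" using i
  proof (induction i rule: dec_induct)
    case (step n) then show ?case using mono[of n] by simp
  qed simp
  then show ?thesis using pos by simp
qed

lemma admissible_bang_control:
  assumes "\<forall>i\<in>{1..k}. abar i > 0"
  shows "admissible k abar (bang_control I lam abar y)"
  unfolding admissible_def
proof (intro ballI conjI allI impI)
  fix i assume i: "i \<in> {1..k}"
  have "bang_control I lam abar y i =
        (\<lambda>s. (if i \<in> I then - (abar i * sgn (y i)) else 0) *
             indicator {..min_null_time (lam i) (abar i) (y i)} s)"
    by (auto simp: bang_control_def indicator_def)
  moreover have "(\<lambda>s. (if i \<in> I then - (abar i * sgn (y i)) else 0) *
             indicator {..min_null_time (lam i) (abar i) (y i)} s :: real)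
      \<in> borel_measurable (lebesgue_on {0..})"
    by (intro borel_measurable_times borel_measurable_const measurable_restrict_space1
        borel_measurable_indicator) auto
  ultimately show "bang_control I lam abar y i \<in> borel_measurable (lebesgue_on {0..})"
    by simp
  fix t :: real
  have "abar i > 0" using assms i by blast
  then show "\<bar>bang_control I lam abar y i t\<bar> \<le> abar i"
    by (auto simp: bang_control_def abs_mult abs_sgn_eq)
qed

lemma opt_time_and_optimal_control:
  assumes B: "dirichlet_eigenbasis \<Omega> \<xi> lam" and "1 \<le> k" "1 \<le> m"
    and abar: "\<forall>i\<in>{1..k}. abar i > 0"
    and uncontrolled: "\<forall>i\<in>{1..m}. k < i \<longrightarrow> l2_inner \<Omega> y0 (\<xi> i) = 0"
  defines "T \<equiv> \<lambda>i. min_null_time (lam i) (abar i) (l2_inner \<Omega> y0 (\<xi> i))"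
  shows "opt_time \<Omega> \<Omega> \<xi> lam m k abar y0 = Max (T ` {1..min k m})"
    and "optimal_control \<Omega> \<Omega> \<xi> lam m k abar y0
           (bang_control {1..min k m} lam abar (\<lambda>i. l2_inner \<Omega> y0 (\<xi> i)))"
proof -
  define c where "c = (\<lambda>i. l2_inner \<Omega> y0 (\<xi> i))"
  define I where "I = {1..min k m}"
  define \<alpha> where "\<alpha> = bang_control I lam abar c"
  define t\<^sub>0 where "t\<^sub>0 = Max (T ` I)"
  have I: "finite I" "I \<noteq> {}" using assms(2,3) by (auto simp: I_def)
  have lam_abar: "lam i > 0" "abar i > 0" if "i \<in> I" for i
    using that abar dirichlet_eigenbasis_eigenvalue_pos[OF B, of i] by (auto simp: I_def)
  have T_le: "T i \<le> t\<^sub>0" if "i \<in> I" for i using I that by (simp add: t\<^sub>0_def)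
  have "1 \<in> I" using assms(2,3) by (simp add: I_def)
  then have "0 \<le> T 1" "T 1 \<le> t\<^sub>0"
    using T_le min_null_time_nonneg[OF lam_abar] by (auto simp: T_def)
  then have "0 \<le> t\<^sub>0" by linarith
  moreover have reaches: "reaches_Sm \<Omega> \<Omega> \<xi> lam m k \<alpha> y0 t\<^sub>0"
    unfolding reaches_Sm_def
  proof
    fix i assume i: "i \<in> {1..m}"
    show "sol_coeff \<Omega> \<Omega> \<xi> lam k \<alpha> y0 i t\<^sub>0 = 0"
    proof (cases "i \<in> I")
      case True
      then have "(\<lambda>s. if i \<le> k then \<alpha> i s else 0) =
                 (\<lambda>s. if s \<le> T i then - (abar i * sgn (c i)) else 0)"
        by (auto simp: \<alpha>_def bang_control_def I_def T_def c_def)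
      then show ?thesis
        using mode_sol_bang_control_eq_0[OF lam_abar[OF True], of "c i" t\<^sub>0] T_le[OF True] True
        by (simp add: sol_coeff_eq_mode_sol[OF B] I_def T_def c_def)
    next
      case False
      then show ?thesis
        using i uncontrolled by (simp add: sol_coeff_eq_mode_sol[OF B] I_def mode_sol_def)
    qed
  qed
  ultimately have reach: "t\<^sub>0 \<in> reach_times \<Omega> \<Omega> \<xi> lam m k abar y0"
    using admissible_bang_control[OF abar] by (auto simp: reach_times_def \<alpha>_def)
  have "t\<^sub>0 \<le> t" if t: "t \<in> reach_times \<Omega> \<Omega> \<xi> lam m k abar y0" for t
  proof -
    obtain \<beta> where \<beta>: "0 \<le> t" "admissible k abar \<beta>" "reaches_Sm \<Omega> \<Omega> \<xi> lam m k \<beta> y0 t"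
      using t unfolding reach_times_def by auto
    have "T i \<le> t" if iI: "i \<in> I" for i
    proof -
      from iI have i: "i \<in> {1..k}" "i \<in> {1..m}" by (auto simp: I_def)
      have "sol_coeff \<Omega> \<Omega> \<xi> lam k \<beta> y0 i t = 0"
        using \<beta>(3) i by (simp add: reaches_Sm_def)
      then have "mode_sol (lam i) (c i) (\<beta> i) t = 0"
        using i by (simp add: sol_coeff_eq_mode_sol[OF B] c_def)
      moreover have "\<bar>\<beta> i s\<bar> \<le> abar i" if "s \<ge> 0" for s
        using \<beta>(2) i that by (simp add: admissible_def)
      ultimately show ?thesis
        unfolding T_def c_def using min_null_time_le_if_mode_sol_eq_0[OF lam_abar[OF iI] \<beta>(1)] by blast
    qed
    then show ?thesis using I by (simp add: t\<^sub>0_def)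
  qed
  then have opt: "opt_time \<Omega> \<Omega> \<xi> lam m k abar y0 = t\<^sub>0"
    unfolding opt_time_def by (rule cInf_eq_minimum[OF reach])
  then show "opt_time \<Omega> \<Omega> \<xi> lam m k abar y0 = Max (T ` {1..min k m})"
    by (simp add: t\<^sub>0_def I_def)
  show "optimal_control \<Omega> \<Omega> \<xi> lam m k abar y0
          (bang_control {1..min k m} lam abar (\<lambda>i. l2_inner \<Omega> y0 (\<xi> i)))"
    using reach reaches opt admissible_bang_control[OF abar]
    unfolding optimal_control_def by (auto simp: \<alpha>_def c_def I_def)
qed

lemma not_AE_lebesgue_on_if_interval:
  fixes a b :: real
  assumes "0 \<le> a" "a < b" "\<And>x. x \<in> {a<..<b} \<Longrightarrow> \<not> P x"
  shows "\<not> (AE x in lebesgue_on {0<..<b}. P x)"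
proof
  assume "AE x in lebesgue_on {0<..<b}. P x"
  then obtain N where N: "{x \<in> space (lebesgue_on {0<..<b}). \<not> P x} \<subseteq> N"
      "emeasure (lebesgue_on {0<..<b}) N = 0" "N \<in> sets (lebesgue_on {0<..<b})"
    by (rule AE_E)
  have "{a<..<b} \<subseteq> N" using N(1) assms by auto
  then have "emeasure (lebesgue_on {0<..<b}) {a<..<b} \<le> 0"
    using emeasure_mono[OF _ N(3)] N(2) by metis
  moreover have "emeasure (lebesgue_on {0<..<b}) {a<..<b} = ennreal (b - a)"
    using assms by (subst emeasure_restrict_space) auto
  ultimately show False using assms by simp
qed

theorem theorem2p2:
  fixes \<Omega> :: "'a::euclidean_space set"
    and \<xi> :: "nat \<Rightarrow> 'a \<Rightarrow> real" and lam :: "nat \<Rightarrow> real"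
    and y0 :: "'a \<Rightarrow> real" and abar :: "nat \<Rightarrow> real" and m k :: nat
    and T :: "nat \<Rightarrow> real"
  assumes "open \<Omega>" and "connected \<Omega>" and "bounded \<Omega>" and "\<Omega> \<noteq> {}"
    and "dirichlet_eigenbasis \<Omega> \<xi> lam"
    and "m \<ge> 2" and "k \<ge> 1"
    and "L2 \<Omega> y0"
    and "\<exists>i\<in>{1..m}. l2_inner \<Omega> y0 (\<xi> i) \<noteq> 0"
    and "\<forall>i\<in>{1..k}. abar i > 0"
    and "\<And>i. T i = (1 / lam i) * ln (1 + (lam i / abar i) * \<bar>l2_inner \<Omega> y0 (\<xi> i)\<bar>)"
    and "(k \<ge> m \<and> (\<exists>i\<in>{1..m}. \<exists>j\<in>{1..m}. T i \<noteq> T j)) \<or>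
         (k < m \<and> (\<forall>j\<in>{k+1..m}. l2_inner \<Omega> y0 (\<xi> j) = 0) \<and>
            (\<exists>i\<in>{1..k}. \<exists>j\<in>{1..k}. T i \<noteq> T j))"
  shows "\<not> bang_bang \<Omega> \<Omega> \<xi> lam m k abar y0"
proof -
  define I where "I = {1..min k m}"
  define \<alpha> where "\<alpha> = bang_control I lam abar (\<lambda>i. l2_inner \<Omega> y0 (\<xi> i))"
  have uncontrolled: "\<forall>i\<in>{1..m}. k < i \<longrightarrow> l2_inner \<Omega> y0 (\<xi> i) = 0"
    using assms(12) by auto
  have T: "T = (\<lambda>i. min_null_time (lam i) (abar i) (l2_inner \<Omega> y0 (\<xi> i)))"
    using assms(11) by (simp add: fun_eq_iff min_null_time_def)
  have opt_time: "opt_time \<Omega> \<Omega> \<xi> lam m k abar y0 = Max (T ` I)"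
    and optimal: "optimal_control \<Omega> \<Omega> \<xi> lam m k abar y0 \<alpha>"
    using opt_time_and_optimal_control[OF assms(5,7) _ assms(10) uncontrolled, folded T] assms(6)
    by (simp_all add: I_def \<alpha>_def)
  have "\<exists>i\<in>I. \<exists>j\<in>I. T i \<noteq> T j"
    using assms(12) unfolding I_def by (cases "m \<le> k") (simp_all add: min_def)
  then obtain i j where ij: "i \<in> I" "j \<in> I" "T i \<noteq> T j" by blast
  then have "T i \<le> Max (T ` I)" "T j \<le> Max (T ` I)" by (simp_all add: I_def)
  then obtain i where i: "i \<in> I" "T i < Max (T ` I)" using ij by (metis less_le)
  have "abar i > 0" "lam i > 0"
    using i(1) assms(10) dirichlet_eigenbasis_eigenvalue_pos[OF assms(5)] by (auto simp: I_def)
  moreover from this have "0 \<le> T i" by (simp add: T min_null_time_nonneg)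
  ultimately have "\<not> (AE t in lebesgue_on {0<..<Max (T ` I)}. \<bar>\<alpha> i t\<bar> = abar i)"
    using i by (intro not_AE_lebesgue_on_if_interval) (auto simp: \<alpha>_def bang_control_def T)
  moreover have "i \<in> {1..k}" using i(1) by (simp add: I_def)
  ultimately show ?thesis
    using optimal unfolding bang_bang_def opt_time by blast
qed

end
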